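(* Let $n$ be a positive integer and $v$ an odd positive integer, let $q=v^{1/n}$, and assume $q\ge 3$. Put $m=\left\lfloor\frac{q-1}{2}\right\rfloor$. Then there exists a $(K,F,Z,S)$ placement delivery array with $K=F=q^n=v$, $Z=q^n-(2m)^n$, and $S=m^nq^n$; consequently there is a $v$-division $(v,M,N)$ coded caching scheme with memory ratio $\frac{M}{N}=1-\frac{2^nm^n}{q^n}$, subpacketization $v$, and transmission load $R=m^n$.
   Context: A $(K,F,Z,S)$ placement delivery array (PDA) is an $F\times K$ array $\mathbf{P}=(p_{j,k})$ with entries from $\{*\}\cup\{1,\dots,S\}$ such that: (C1) each column contains exactly $Z$ stars; (C2) each integer of $\{1,\dots,S\}$ occurs at least once; (C3) for any two distinct entries $p_{j_1,k_1}=p_{j_2,k_2}=s$ (an integer) we have $j_1\neq j_2$, $k_1\neq k_2$, and $p_{j_1,k_2}=p_{j_2,k_1}=*$. A $(K,M,N)$ coded caching system consists of a server storing $N$ equal-size files and $K$ users each with a cache of size $M$ files, connected by an error-free shared broadcast link. An $F$-division scheme splits each file into $F$ equal-size packets; in the placement phase packets are stored in user caches without knowledge of future demands; in the delivery phase each user requests one file and the server broadcasts coded messages (XORs of packets) so that every user can decode its requested file. The transmission load $R$ is the worst case over all demand vectors of the total broadcast size normalized by the file size; $M/N$ is the memory ratio. *)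

theory Defs
  imports Complex_Main
begin

text \<open>Placement delivery array. The F x K array is a function P with
  P j k for row j < F and column k < K; None is the star, Some s an integer entry.\<close>

definition is_PDA :: "nat \<Rightarrow> nat \<Rightarrow> nat \<Rightarrow> nat \<Rightarrow> (nat \<Rightarrow> nat \<Rightarrow> nat option) \<Rightarrow> bool" where
  "is_PDA K F Z S P \<longleftrightarrow>
     (\<forall>j<F. \<forall>k<K. \<forall>s. P j k = Some s \<longrightarrow> s \<in> {1..S}) \<and>
     (\<forall>k<K. card {j. j < F \<and> P j k = None} = Z) \<and>
     (\<forall>s\<in>{1..S}. \<exists>j<F. \<exists>k<K. P j k = Some s) \<and>
     (\<forall>j1<F. \<forall>k1<K. \<forall>j2<F. \<forall>k2<K. \<forall>s.
        P j1 k1 = Some s \<and> P j2 k2 = Some s \<and> (j1, k1) \<noteq> (j2, k2) \<longrightarrow>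
          j1 \<noteq> j2 \<and> k1 \<noteq> k2 \<and> P j1 k2 = None \<and> P j2 k1 = None)"

definition exists_PDA :: "nat \<Rightarrow> nat \<Rightarrow> nat \<Rightarrow> nat \<Rightarrow> bool" where
  "exists_PDA K F Z S \<longleftrightarrow> (\<exists>P. is_PDA K F Z S P)"

text \<open>A packet is a pair (file index i < N, packet index j < F).
  A coded message is the XOR of a finite set of packets, represented by that set;
  XOR of messages is symmetric difference. A user can decode a packet if the packet
  lies in the XOR-span (GF(2)-span) of its cached packets and the broadcast messages.\<close>

definition packets :: "nat \<Rightarrow> nat \<Rightarrow> (nat \<times> nat) set" where
  "packets N F = {(i, j). i < N \<and> j < F}"

inductive_set xor_span :: "(nat \<times> nat) set set \<Rightarrow> (nat \<times> nat) set set"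
  for G :: "(nat \<times> nat) set set" where
  zero: "{} \<in> xor_span G"
| add: "A \<in> xor_span G \<Longrightarrow> g \<in> G \<Longrightarrow> (A - g) \<union> (g - A) \<in> xor_span G"

text \<open>An F-division (K,M,N) coded caching scheme with uncoded placement
  (cache k = set of packets stored by user k, chosen independently of demands) and
  XOR-coded delivery (for each demand vector d, a list of coded messages),
  with memory at most M files per user and worst-case load at most R files.\<close>

definition is_caching_scheme ::
  "nat \<Rightarrow> real \<Rightarrow> nat \<Rightarrow> nat \<Rightarrow> real \<Rightarrow>
   (nat \<Rightarrow> (nat \<times> nat) set) \<Rightarrow> ((nat \<Rightarrow> nat) \<Rightarrow> (nat \<times> nat) set list) \<Rightarrow> bool" where
  "is_caching_scheme K M N F R cache deliver \<longleftrightarrow>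
     F > 0 \<and>
     (\<forall>k<K. cache k \<subseteq> packets N F \<and> real (card (cache k)) \<le> M * real F) \<and>
     (\<forall>d. (\<forall>k<K. d k < N) \<longrightarrow>
        (\<forall>msg \<in> set (deliver d). msg \<subseteq> packets N F) \<and>
        real (length (deliver d)) \<le> R * real F \<and>
        (\<forall>k<K. \<forall>j<F. {(d k, j)} \<in> xor_span ((\<lambda>p. {p}) ` cache k \<union> set (deliver d))))"

definition exists_caching_scheme :: "nat \<Rightarrow> real \<Rightarrow> nat \<Rightarrow> nat \<Rightarrow> real \<Rightarrow> bool" where
  "exists_caching_scheme K M N F R \<longleftrightarrow>
     (\<exists>cache deliver. is_caching_scheme K M N F R cache deliver)"

end

theory Submission
  imports Defs "HOL-Library.FuncSet" "HOL-Number_Theory.Cong"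
begin

(* Rows and columns are the residues modulo v. Integer vectors with entries in [-m, m] are
   mapped into Z/vZ by their balanced base-(2m+1) expansion, which is injective because
   (2m+1)^n <= v. The cell (x, y) carries an integer iff y - x is the image of a vector e with
   no zero entry, and its label is the box with opposite corners x and y. Two cells with the
   same label are different diagonals of the same box, so their vectors have opposite signs in
   some coordinate i; the crossed cells then differ by a vector with i-th entry 0, hence are
   stars. Each column has (2m)^n integer cells and there are m^n v boxes. The caching scheme
   is the usual one of a PDA: user k caches the packets of the star rows of column k, and for
   every label the server sends the XOR of the requested packets at the cells with that label. *)

section \<open>Placement delivery arrays with arbitrary labels\<close>

definition is_PDA_over :: "'a set \<Rightarrow> nat \<Rightarrow> nat \<Rightarrow> nat \<Rightarrow> (nat \<Rightarrow> nat \<Rightarrow> 'a option) \<Rightarrow> bool" where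
  "is_PDA_over L K F Z P \<longleftrightarrow>
     (\<forall>j<F. \<forall>k<K. \<forall>s. P j k = Some s \<longrightarrow> s \<in> L) \<and>
     (\<forall>k<K. card {j. j < F \<and> P j k = None} = Z) \<and>
     (\<forall>s\<in>L. \<exists>j<F. \<exists>k<K. P j k = Some s) \<and>
     (\<forall>j1<F. \<forall>k1<K. \<forall>j2<F. \<forall>k2<K. \<forall>s.
        P j1 k1 = Some s \<and> P j2 k2 = Some s \<and> (j1, k1) \<noteq> (j2, k2) \<longrightarrow>
          j1 \<noteq> j2 \<and> k1 \<noteq> k2 \<and> P j1 k2 = None \<and> P j2 k1 = None)"

lemma is_PDA_iff_is_PDA_over: "is_PDA K F Z S P \<longleftrightarrow> is_PDA_over {1..S} K F Z P"
  unfolding is_PDA_def is_PDA_over_def ..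

lemma is_PDA_over_relabel:
  assumes inj: "inj_on b L" and PDA: "is_PDA_over L K F Z P"
  shows "is_PDA_over (b ` L) K F Z (\<lambda>j k. map_option b (P j k))"
proof -
  have labels: "\<And>j k l. j < F \<Longrightarrow> k < K \<Longrightarrow> P j k = Some l \<Longrightarrow> l \<in> L"
    and stars: "\<And>k. k < K \<Longrightarrow> card {j. j < F \<and> P j k = None} = Z"
    and occur: "\<And>l. l \<in> L \<Longrightarrow> \<exists>j<F. \<exists>k<K. P j k = Some l"
    and cross: "\<And>j1 k1 j2 k2 l. j1 < F \<Longrightarrow> k1 < K \<Longrightarrow> j2 < F \<Longrightarrow> k2 < K \<Longrightarrow>
      P j1 k1 = Some l \<Longrightarrow> P j2 k2 = Some l \<Longrightarrow> (j1, k1) \<noteq> (j2, k2) \<Longrightarrow>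
      j1 \<noteq> j2 \<and> k1 \<noteq> k2 \<and> P j1 k2 = None \<and> P j2 k1 = None"
    using PDA unfolding is_PDA_over_def by blast+
  show ?thesis
    unfolding is_PDA_over_def
  proof (intro conjI; intro allI impI ballI)
    fix j k s assume "j < F" "k < K" "map_option b (P j k) = Some s"
    with labels show "s \<in> b ` L" by blast
  next
    fix k assume "k < K"
    with stars show "card {j. j < F \<and> map_option b (P j k) = None} = Z" by simp
  next
    fix s assume "s \<in> b ` L"
    then obtain l where "l \<in> L" and s: "s = b l" by blast
    with occur obtain j k where "j < F" "k < K" "P j k = Some l" by blast
    with s show "\<exists>j<F. \<exists>k<K. map_option b (P j k) = Some s" by auto
  next
    fix j1 k1 j2 k2 s
    assume j1: "j1 < F" "k1 < K" and j2: "j2 < F" "k2 < K"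
      and same: "map_option b (P j1 k1) = Some s \<and> map_option b (P j2 k2) = Some s \<and> (j1, k1) \<noteq> (j2, k2)"
    then obtain l1 l2 where l: "P j1 k1 = Some l1" "P j2 k2 = Some l2" "b l1 = b l2"
      by auto
    moreover have "l1 \<in> L" "l2 \<in> L"
      using labels j1 j2 l by blast+
    ultimately have "P j2 k2 = Some l1"
      using inj by (simp add: inj_on_eq_iff)
    from cross[OF j1 j2 l(1) this] same
    show "j1 \<noteq> j2 \<and> k1 \<noteq> k2 \<and> map_option b (P j1 k2) = None \<and> map_option b (P j2 k1) = None"
      by simp
  qed
qed

lemma exists_PDA_if_is_PDA_over:
  assumes "finite L" and "is_PDA_over L K F Z P"
  shows "exists_PDA K F Z (card L)"
proof -
  obtain b where "bij_betw b L {1..card L}"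
    using ex_bij_betw_nat_finite_1[OF assms(1)] bij_betw_inv by blast
  then have "inj_on b L" and "b ` L = {1..card L}"
    unfolding bij_betw_def by auto
  with is_PDA_over_relabel[OF this(1) assms(2)]
  have "is_PDA_over {1..card L} K F Z (\<lambda>j k. map_option b (P j k))"
    by simp
  then show ?thesis
    unfolding exists_PDA_def is_PDA_iff_is_PDA_over by blast
qed

section \<open>Coded caching schemes from placement delivery arrays\<close>

lemma xor_span_generator: "g \<in> G \<Longrightarrow> g \<in> xor_span G"
  using xor_span.add[OF xor_span.zero, of g G] by simp

lemma xor_span_Diff_singletons:
  assumes "finite B" and "B \<subseteq> A" and "\<forall>p\<in>B. {p} \<in> G" and "A \<in> xor_span G"
  shows "A - B \<in> xor_span G"
  using assms
proof (induction B rule: finite_induct)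
  case empty
  then show ?case by simp
next
  case (insert p B)
  then have "((A - B) - {p}) \<union> ({p} - (A - B)) \<in> xor_span G"
    by (intro xor_span.add) auto
  moreover have "((A - B) - {p}) \<union> ({p} - (A - B)) = A - insert p B"
    using insert.hyps(2) insert.prems(1) by auto
  ultimately show ?case by simp
qed

definition PDA_cache :: "nat \<Rightarrow> nat \<Rightarrow> (nat \<Rightarrow> nat \<Rightarrow> nat option) \<Rightarrow> nat \<Rightarrow> (nat \<times> nat) set" where
  "PDA_cache N F P k = {(i, j). i < N \<and> j < F \<and> P j k = None}"

definition PDA_message ::
  "nat \<Rightarrow> nat \<Rightarrow> (nat \<Rightarrow> nat \<Rightarrow> nat option) \<Rightarrow> (nat \<Rightarrow> nat) \<Rightarrow> nat \<Rightarrow> (nat \<times> nat) set" where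
  "PDA_message K F P d s = {(d k, j) | j k. j < F \<and> k < K \<and> P j k = Some s}"

lemma card_PDA_cache:
  assumes "is_PDA K F Z S P" and "k < K"
  shows "card (PDA_cache N F P k) = N * Z"
proof -
  have "PDA_cache N F P k = {..<N} \<times> {j. j < F \<and> P j k = None}"
    unfolding PDA_cache_def by auto
  with assms show ?thesis
    unfolding is_PDA_def by (simp add: card_cartesian_product)
qed

lemma PDA_decoding:
  assumes PDA: "is_PDA K F Z S P" and "\<forall>k<K. d k < N" and "k < K" and "j < F"
  shows "{(d k, j)} \<in> xor_span ((\<lambda>p. {p}) ` PDA_cache N F P k \<union> PDA_message K F P d ` {1..S})"
    (is "_ \<in> xor_span ?G")
proof (cases "P j k")
  case None
  with assms(2-4) have "(d k, j) \<in> PDA_cache N F P k"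
    unfolding PDA_cache_def by auto
  then show ?thesis by (intro xor_span_generator) auto
next
  case (Some s)
  define B where "B = PDA_message K F P d s - {(d k, j)}"
  have "s \<in> {1..S}"
    using PDA Some assms(3,4) unfolding is_PDA_def by blast
  then have message: "PDA_message K F P d s \<in> xor_span ?G"
    by (intro xor_span_generator) auto
  have B_cached: "B \<subseteq> PDA_cache N F P k"
  proof
    fix p assume "p \<in> B"
    then obtain j' k' where p: "p = (d k', j')" "j' < F" "k' < K" "P j' k' = Some s"
      and "(j', k') \<noteq> (j, k)"
      unfolding B_def PDA_message_def by blast
    then have "P j' k = None"
      using PDA Some assms(3,4) unfolding is_PDA_def by blast
    with p assms(2) show "p \<in> PDA_cache N F P k"
      unfolding PDA_cache_def by auto
  qed
  moreover have "finite (PDA_cache N F P k)"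
    by (rule finite_subset[of _ "{..<N} \<times> {..<F}"]) (auto simp: PDA_cache_def)
  ultimately have "finite B"
    by (rule finite_subset)
  then have decoded: "PDA_message K F P d s - B \<in> xor_span ?G"
  proof (rule xor_span_Diff_singletons[OF _ _ _ message])
    show "B \<subseteq> PDA_message K F P d s" unfolding B_def by blast
    show "\<forall>p\<in>B. {p} \<in> ?G" using B_cached by blast
  qed
  moreover have "PDA_message K F P d s - B = {(d k, j)}"
    using Some assms(3,4) unfolding B_def PDA_message_def by auto
  ultimately show ?thesis by (rule back_subst)
qed

lemma caching_scheme_of_PDA:
  assumes PDA: "is_PDA K F Z S P" and "F > 0"
    and "real N * real Z \<le> M * real F" and "real S \<le> R * real F"
  shows "exists_caching_scheme K M N F R"
proof -
  define deliver where "deliver d = map (PDA_message K F P d) [1..<Suc S]" for d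
  have "is_caching_scheme K M N F R (PDA_cache N F P) deliver"
    unfolding is_caching_scheme_def
  proof (intro conjI allI impI ballI)
    fix k assume "k < K"
    show "PDA_cache N F P k \<subseteq> packets N F"
      unfolding PDA_cache_def packets_def by auto
    show "real (card (PDA_cache N F P k)) \<le> M * real F"
      using card_PDA_cache[OF PDA \<open>k < K\<close>] assms(3) by simp
  next
    fix d assume d: "\<forall>k<K. d k < N"
    have messages: "set (deliver d) = PDA_message K F P d ` {1..S}"
      unfolding deliver_def by auto
    show "msg \<subseteq> packets N F" if "msg \<in> set (deliver d)" for msg
      using that d unfolding messages PDA_message_def packets_def by auto
    show "real (length (deliver d)) \<le> R * real F"
      unfolding deliver_def using assms(4) by simp
    show "{(d k, j)} \<in> xor_span ((\<lambda>p. {p}) ` PDA_cache N F P k \<union> set (deliver d))"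
      if "k < K" and "j < F" for k j
      unfolding messages using PDA_decoding[OF PDA d that] .
  qed (fact assms(2))
  then show ?thesis
    unfolding exists_caching_scheme_def by blast
qed

section \<open>Balanced digit expansions\<close>

lemma abs_sum_digits_less:
  fixes f :: "nat \<Rightarrow> int"
  assumes "0 < a" and "\<forall>i<n. \<bar>f i\<bar> < a"
  shows "\<bar>\<Sum>i<n. f i * a ^ i\<bar> < a ^ n"
  using assms(2)
proof (induction n)
  case 0
  then show ?case by simp
next
  case (Suc n)
  have "\<bar>\<Sum>i<Suc n. f i * a ^ i\<bar> \<le> \<bar>\<Sum>i<n. f i * a ^ i\<bar> + \<bar>f n * a ^ n\<bar>"
    by (simp add: abs_triangle_ineq)
  also have "\<dots> = \<bar>\<Sum>i<n. f i * a ^ i\<bar> + \<bar>f n\<bar> * a ^ n"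
    using assms(1) by (simp add: abs_mult)
  also have "\<dots> \<le> (a ^ n - 1) + (a - 1) * a ^ n"
    using Suc assms(1) by (intro add_mono mult_right_mono) auto
  finally show ?case by (simp add: algebra_simps)
qed

lemma sum_digits_eq_0_imp_digits_0:
  fixes f :: "nat \<Rightarrow> int"
  assumes "0 < a" and "\<forall>i<n. \<bar>f i\<bar> < a" and "(\<Sum>i<n. f i * a ^ i) = 0"
  shows "\<forall>i<n. f i = 0"
  using assms(2,3)
proof (induction n)
  case 0
  then show ?case by simp
next
  case (Suc n)
  have "(\<Sum>i<n. f i * a ^ i) = - (f n * a ^ n)"
    using Suc.prems(2) by (simp add: eq_neg_iff_add_eq_0)
  then have "\<bar>f n\<bar> * a ^ n = \<bar>\<Sum>i<n. f i * a ^ i\<bar>"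
    using assms(1) by (simp add: abs_mult)
  also have "\<dots> < a ^ n"
    using abs_sum_digits_less[OF assms(1)] Suc.prems(1) by simp
  finally have "f n = 0"
    using assms(1) by (simp add: mult_less_cancel_right2)
  with Suc show ?case by (simp add: less_Suc_eq)
qed

lemma dvd_sum_digits_imp_digits_0:
  fixes f :: "nat \<Rightarrow> int"
  assumes "0 < a" and "a ^ n \<le> v" and "\<forall>i<n. \<bar>f i\<bar> < a" and "v dvd (\<Sum>i<n. f i * a ^ i)"
  shows "\<forall>i<n. f i = 0"
proof -
  have "\<bar>\<Sum>i<n. f i * a ^ i\<bar> < v"
    using abs_sum_digits_less[OF assms(1,3)] assms(2) by linarith
  have "(\<Sum>i<n. f i * a ^ i) = 0"
  proof (rule ccontr)
    assume "(\<Sum>i<n. f i * a ^ i) \<noteq> 0"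
    then have "\<bar>v\<bar> \<le> \<bar>\<Sum>i<n. f i * a ^ i\<bar>"
      using assms(4) by (rule dvd_imp_le_int)
    with \<open>\<bar>\<Sum>i<n. f i * a ^ i\<bar> < v\<close> show False by linarith
  qed
  with assms(1,3) show ?thesis by (rule sum_digits_eq_0_imp_digits_0)
qed

lemma nat_mod_eq_iff_cong:
  fixes t :: int
  assumes "x < v"
  shows "x = nat (t mod int v) \<longleftrightarrow> [int x = t] (mod int v)"
  using assms by (auto simp: cong_def)

section \<open>The box construction\<close>

definition neg_part :: "(nat \<Rightarrow> int) \<Rightarrow> nat \<Rightarrow> int" where
  "neg_part e i = min (e i) 0"

definition pos_part :: "(nat \<Rightarrow> int) \<Rightarrow> nat \<Rightarrow> int" where
  "pos_part e i = max (e i) 0"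

lemma neg_part_add_pos_part: "(\<lambda>i. neg_part e i + pos_part e i) = e"
  by (simp add: fun_eq_iff neg_part_def pos_part_def min_def max_def)

lemma opposite_coordinate_parts:
  assumes "e' i = - e i" and "e i \<noteq> 0"
  shows "neg_part e i \<noteq> neg_part e' i" and "pos_part e i \<noteq> pos_part e' i"
    and "pos_part e' i + neg_part e i = 0"
  using assms unfolding neg_part_def pos_part_def by (auto simp: min_def max_def)

locale box_PDA =
  fixes m n v :: nat
  assumes radix_le: "(2 * m + 1) ^ n \<le> v"
begin

definition shifts :: "(nat \<Rightarrow> int) set" where
  "shifts = (\<Pi>\<^sub>E i\<in>{..<n}. {-int m..int m} - {0})"

definition encode :: "(nat \<Rightarrow> int) \<Rightarrow> int" where
  "encode e = (\<Sum>i<n. e i * (2 * int m + 1) ^ i)"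

definition shift_of :: "nat \<Rightarrow> nat \<Rightarrow> (nat \<Rightarrow> int) \<Rightarrow> bool" where
  "shift_of x y e \<longleftrightarrow> e \<in> shifts \<and> [int y = int x + encode e] (mod int v)"

text \<open>The label of the cell (x, x + e) is the box spanned by its two corners, given by its side
  lengths |e i| and its lower corner x + min(e, 0).\<close>

definition label :: "nat \<Rightarrow> (nat \<Rightarrow> int) \<Rightarrow> (nat \<Rightarrow> int) \<times> int" where
  "label x e = (restrict (\<lambda>i. \<bar>e i\<bar>) {..<n}, (int x + encode (neg_part e)) mod int v)"

definition labels :: "((nat \<Rightarrow> int) \<times> int) set" where
  "labels = (\<Pi>\<^sub>E i\<in>{..<n}. {1..int m}) \<times> {0..<int v}"

definition array :: "nat \<Rightarrow> nat \<Rightarrow> ((nat \<Rightarrow> int) \<times> int) option" where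
  "array x y = (if \<exists>e. shift_of x y e then Some (label x (THE e. shift_of x y e)) else None)"

lemma v_pos: "0 < v"
  using radix_le by (metis gr0I le_zero_eq power_not_zero add_is_0 one_neq_zero)

lemma encode_diff: "encode f - encode g = encode (\<lambda>i. f i - g i)"
  unfolding encode_def by (simp add: left_diff_distrib sum_subtractf)

lemma encode_add: "encode (\<lambda>i. f i + g i) = encode f + encode g"
  unfolding encode_def by (simp add: distrib_right sum.distrib)

lemma encode_neg_part_pos_part: "encode e = encode (neg_part e) + encode (pos_part e)"
  using encode_add[of "neg_part e" "pos_part e"] by (simp add: neg_part_add_pos_part)

lemma encode_cong_imp_eq:
  assumes "\<forall>i<n. \<bar>f i\<bar> \<le> int m" and "\<forall>i<n. \<bar>g i\<bar> \<le> int m"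
    and "[encode f = encode g] (mod int v)"
  shows "\<forall>i<n. f i = g i"
proof -
  have "int ((2 * m + 1) ^ n) \<le> int v"
    using radix_le by (simp only: of_nat_le_iff)
  then have "(2 * int m + 1) ^ n \<le> int v"
    by (simp add: add.commute)
  moreover have "int v dvd encode (\<lambda>i. f i - g i)"
    using assms(3) by (simp add: cong_iff_dvd_diff encode_diff)
  moreover have "\<bar>f i - g i\<bar> < 2 * int m + 1" if "i < n" for i
    using assms(1,2) that by fastforce
  ultimately have "\<forall>i<n. f i - g i = 0"
    unfolding encode_def by (intro dvd_sum_digits_imp_digits_0) auto
  then show ?thesis by simp
qed

lemma shifts_coordinate:
  assumes "e \<in> shifts" and "i < n"
  shows "e i \<noteq> 0" and "\<bar>e i\<bar> \<le> int m"
proof -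
  have "e i \<in> {-int m..int m} - {0}"
    using assms PiE_mem[of e "{..<n}" "\<lambda>_. {-int m..int m} - {0}" i]
    unfolding shifts_def by simp
  then show "e i \<noteq> 0" and "\<bar>e i\<bar> \<le> int m"
    by auto
qed

lemma shifts_eqI:
  assumes "e \<in> shifts" and "e' \<in> shifts" and "\<forall>i<n. e i = e' i"
  shows "e = e'"
  using PiE_ext[OF assms(1,2)[unfolded shifts_def]] assms(3) by simp

lemma shift_of_unique:
  assumes "shift_of x y e" and "shift_of x y e'"
  shows "e = e'"
proof -
  have shifts: "e \<in> shifts" "e' \<in> shifts"
    and "[int y = int x + encode e] (mod int v)" "[int y = int x + encode e'] (mod int v)"
    using assms unfolding shift_of_def by blast+
  then have "[int x + encode e = int x + encode e'] (mod int v)"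
    by (blast intro: cong_trans cong_sym)
  then have "[encode e = encode e'] (mod int v)"
    by (simp only: cong_add_lcancel)
  with shifts have "\<forall>i<n. e i = e' i"
    using shifts_coordinate(2) by (intro encode_cong_imp_eq) blast+
  with shifts show ?thesis
    by (rule shifts_eqI)
qed

lemma the_shift: "shift_of x y e \<Longrightarrow> (THE e. shift_of x y e) = e"
  by (rule the_equality) (auto intro: shift_of_unique)

lemma array_eq_Some_iff: "array x y = Some l \<longleftrightarrow> (\<exists>e. shift_of x y e \<and> l = label x e)"
  unfolding array_def using the_shift by auto

lemma array_eq_None_iff: "array x y = None \<longleftrightarrow> (\<nexists>e. shift_of x y e)"
  unfolding array_def by simp

lemma card_shifts: "card shifts = (2 * m) ^ n"
proof -
  have "card ({-int m..int m} - {0}) = 2 * m"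
    by (simp add: card_Diff_singleton)
  then show ?thesis
    unfolding shifts_def by (simp add: card_PiE)
qed

lemma card_labels: "card labels = m ^ n * v"
  unfolding labels_def by (simp add: card_cartesian_product card_PiE)

lemma card_column_entries:
  "card {x. x < v \<and> (\<exists>e. shift_of x y e)} = (2 * m) ^ n"
proof -
  define source where "source e = nat ((int y - encode e) mod int v)" for e
  have source_less: "source e < v" for e
    using v_pos by (simp add: source_def nat_less_iff)
  have source: "x = source e \<longleftrightarrow> shift_of x y e" if "x < v" and "e \<in> shifts" for x e
  proof -
    have swap: "int x - (int y - encode e) = - (int y - (int x + encode e))"
      by simp
    from that show ?thesis
      unfolding source_def shift_of_def nat_mod_eq_iff_cong[OF \<open>x < v\<close>] cong_iff_dvd_diff
        swap dvd_minus_iff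
      by simp
  qed
  have "{x. x < v \<and> (\<exists>e. shift_of x y e)} = source ` shifts"
    using source source_less by (auto simp: shift_of_def)
  moreover have "inj_on source shifts"
  proof
    fix e e' assume "e \<in> shifts" "e' \<in> shifts" "source e = source e'"
    with source source_less have "shift_of (source e) y e" "shift_of (source e) y e'"
      by metis+
    then show "e = e'"
      by (rule shift_of_unique)
  qed
  ultimately show ?thesis
    using card_shifts by (simp add: card_image)
qed

lemma shifts_parts_bounded:
  assumes "e \<in> shifts" and "e' \<in> shifts" and "i < n"
  shows "\<bar>neg_part e i\<bar> \<le> int m" and "\<bar>pos_part e i\<bar> \<le> int m"
    and "\<bar>pos_part e i + neg_part e' i\<bar> \<le> int m"
  using shifts_coordinate(2)[OF assms(1,3)] shifts_coordinate(2)[OF assms(2,3)]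
  unfolding neg_part_def pos_part_def by auto

lemma label_in_labels:
  assumes "e \<in> shifts"
  shows "label x e \<in> labels"
proof -
  have "\<bar>e i\<bar> \<in> {1..int m}" if "i < n" for i
    using shifts_coordinate[OF assms that] by auto
  then have "restrict (\<lambda>i. \<bar>e i\<bar>) {..<n} \<in> (\<Pi>\<^sub>E i\<in>{..<n}. {1..int m})"
    by (simp add: restrict_PiE_iff)
  moreover have "(int x + encode (neg_part e)) mod int v \<in> {0..<int v}"
    using v_pos by simp
  ultimately show ?thesis
    unfolding label_def labels_def by blast
qed

lemma labels_occur:
  assumes "l \<in> labels"
  shows "\<exists>x<v. \<exists>y<v. array x y = Some l"
proof -
  obtain c z where l: "l = (c, z)"
    by (cases l)
  with assms have c: "c \<in> (\<Pi>\<^sub>E i\<in>{..<n}. {1..int m})" and z: "0 \<le> z" "z < int v"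
    unfolding labels_def by auto
  have c_range: "1 \<le> c i \<and> c i \<le> int m" if "i < n" for i
    using PiE_mem[OF c, of i] that by simp
  define y where "y = nat ((z + encode c) mod int v)"
  have "(\<Pi>\<^sub>E i\<in>{..<n}. {1..int m}) \<subseteq> shifts"
    unfolding shifts_def by (rule PiE_mono) auto
  with c have "c \<in> shifts"
    by blast
  moreover have "[int y = int (nat z) + encode c] (mod int v)"
    using z v_pos unfolding y_def by simp
  ultimately have "shift_of (nat z) y c"
    unfolding shift_of_def by blast
  have "restrict (\<lambda>i. \<bar>c i\<bar>) {..<n} = restrict c {..<n}"
    by (rule restrict_ext) (use c_range in force)
  then have "restrict (\<lambda>i. \<bar>c i\<bar>) {..<n} = c"
    using PiE_restrict[OF c] by simp
  moreover have "encode (neg_part c) = 0"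
    unfolding encode_def neg_part_def using c_range by (intro sum.neutral) force
  ultimately have "label (nat z) c = l"
    using z unfolding label_def l by simp
  with \<open>shift_of (nat z) y c\<close> have "array (nat z) y = Some l"
    unfolding array_eq_Some_iff by blast
  moreover have "y < v" "nat z < v"
    using v_pos z unfolding y_def by (simp_all add: nat_less_iff)
  ultimately show ?thesis
    by blast
qed

lemma shift_of_corners:
  assumes "shift_of x y e"
  shows "[int y - encode (pos_part e) = int x + encode (neg_part e)] (mod int v)"
proof -
  have "[int y - encode (pos_part e) = int x + encode e - encode (pos_part e)] (mod int v)"
    using assms unfolding shift_of_def by (intro cong_diff) auto
  then show ?thesis
    by (simp add: encode_neg_part_pos_part[of e])
qed

lemma same_label_corners:
  assumes "shift_of x1 y1 e1" and "shift_of x2 y2 e2" and "label x1 e1 = label x2 e2"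
  shows "\<forall>i<n. \<bar>e1 i\<bar> = \<bar>e2 i\<bar>"
    and "[int x1 + encode (neg_part e1) = int x2 + encode (neg_part e2)] (mod int v)"
    and "[int y1 - encode (pos_part e1) = int y2 - encode (pos_part e2)] (mod int v)"
proof -
  have abs_eq: "restrict (\<lambda>i. \<bar>e1 i\<bar>) {..<n} = restrict (\<lambda>i. \<bar>e2 i\<bar>) {..<n}"
    using assms(3) unfolding label_def by simp
  show "\<forall>i<n. \<bar>e1 i\<bar> = \<bar>e2 i\<bar>"
  proof (intro allI impI)
    fix i assume "i < n"
    with fun_cong[OF abs_eq, of i] show "\<bar>e1 i\<bar> = \<bar>e2 i\<bar>"
      by simp
  qed
  show lower: "[int x1 + encode (neg_part e1) = int x2 + encode (neg_part e2)] (mod int v)"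
    using assms(3) unfolding label_def cong_def by simp
  show "[int y1 - encode (pos_part e1) = int y2 - encode (pos_part e2)] (mod int v)"
    using cong_trans[OF cong_trans[OF shift_of_corners[OF assms(1)] lower]
        cong_sym[OF shift_of_corners[OF assms(2)]]] .
qed

lemma no_shift_across:
  assumes "shift_of x2 y2 e2" and "e1 \<in> shifts"
    and "[int x1 + encode (neg_part e1) = int x2 + encode (neg_part e2)] (mod int v)"
    and "i < n" and "e2 i = - e1 i"
  shows "\<not> shift_of x1 y2 e3"
proof
  assume e3: "shift_of x1 y2 e3"
  have "[int x1 + encode e3 = int x2 + encode e2] (mod int v)"
    using e3 assms(1) unfolding shift_of_def by (blast intro: cong_trans cong_sym)
  also have "int x2 + encode e2 = (int x2 + encode (neg_part e2)) + encode (pos_part e2)"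
    by (simp add: encode_neg_part_pos_part[of e2])
  also have "[(int x2 + encode (neg_part e2)) + encode (pos_part e2)
      = (int x1 + encode (neg_part e1)) + encode (pos_part e2)] (mod int v)"
    using assms(3) by (rule cong_add[OF cong_sym]) simp
  also have "(int x1 + encode (neg_part e1)) + encode (pos_part e2)
      = int x1 + encode (\<lambda>j. pos_part e2 j + neg_part e1 j)"
    by (simp add: encode_add)
  finally have "[encode e3 = encode (\<lambda>j. pos_part e2 j + neg_part e1 j)] (mod int v)"
    by (simp only: cong_add_lcancel)
  moreover have "e3 \<in> shifts" "e2 \<in> shifts"
    using e3 assms(1) unfolding shift_of_def by blast+
  ultimately have "\<forall>j<n. e3 j = pos_part e2 j + neg_part e1 j"
    using shifts_coordinate(2) shifts_parts_bounded(3) assms(2)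
    by (intro encode_cong_imp_eq) blast+
  then have "e3 i = 0"
    using opposite_coordinate_parts(3)[of e2 i e1, OF assms(5) shifts_coordinate(1)[OF assms(2,4)]] assms(4)
    by simp
  with \<open>e3 \<in> shifts\<close> assms(4) show False
    using shifts_coordinate(1) by blast
qed

lemma same_label_opposite_coordinate:
  assumes "x1 < v" and "y1 < v" and "x2 < v" and "y2 < v"
    and e1: "shift_of x1 y1 e1" and e2: "shift_of x2 y2 e2"
    and "label x1 e1 = label x2 e2" and "(x1, y1) \<noteq> (x2, y2)"
  shows "\<exists>i<n. e2 i = - e1 i"
proof (rule ccontr)
  assume no_opposite: "\<not> (\<exists>i<n. e2 i = - e1 i)"
  note corners = same_label_corners[OF e1 e2 assms(7)]
  have "e1 i = e2 i" if "i < n" for i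
  proof -
    from that corners(1) no_opposite have "\<bar>e1 i\<bar> = \<bar>e2 i\<bar>" and "e2 i \<noteq> - e1 i"
      by auto
    then show ?thesis by arith
  qed
  with e1 e2 have "e1 = e2"
    unfolding shift_of_def by (intro shifts_eqI) auto
  with corners(2) have "[int x1 = int x2] (mod int v)"
    by (simp add: cong_add_rcancel)
  then have "x1 = x2"
    unfolding cong_int_iff using assms(1,3) by (rule cong_less_modulus_unique_nat)
  with e1 e2 \<open>e1 = e2\<close> have "[int y1 = int y2] (mod int v)"
    unfolding shift_of_def by (blast intro: cong_trans cong_sym)
  then have "y1 = y2"
    unfolding cong_int_iff using assms(2,4) by (rule cong_less_modulus_unique_nat)
  with \<open>x1 = x2\<close> assms(8) show False
    by simp
qed

lemma array_same_label:
  assumes "x1 < v" and "y1 < v" and "x2 < v" and "y2 < v"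
    and "array x1 y1 = Some l" and "array x2 y2 = Some l" and "(x1, y1) \<noteq> (x2, y2)"
  shows "x1 \<noteq> x2 \<and> y1 \<noteq> y2 \<and> array x1 y2 = None \<and> array x2 y1 = None"
proof -
  obtain e1 e2 where e1: "shift_of x1 y1 e1" and e2: "shift_of x2 y2 e2"
    and same: "label x1 e1 = label x2 e2"
    using assms(5,6) unfolding array_eq_Some_iff by metis
  note corners = same_label_corners[OF e1 e2 same]
  have shifts: "e1 \<in> shifts" "e2 \<in> shifts"
    using e1 e2 unfolding shift_of_def by blast+
  obtain i where i: "i < n" and opposite: "e2 i = - e1 i"
    using same_label_opposite_coordinate[OF assms(1-4) e1 e2 same assms(7)] by blast
  note parts = opposite_coordinate_parts[of e2 i e1, OF opposite shifts_coordinate(1)[OF shifts(1) i]]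
  have "x1 \<noteq> x2"
  proof
    assume "x1 = x2"
    with corners(2) have "[encode (neg_part e1) = encode (neg_part e2)] (mod int v)"
      by (simp add: cong_add_lcancel)
    then have "\<forall>j<n. neg_part e1 j = neg_part e2 j"
      using shifts shifts_parts_bounded(1) by (intro encode_cong_imp_eq) blast+
    with i parts(1) show False
      by blast
  qed
  moreover have "y1 \<noteq> y2"
  proof
    assume "y1 = y2"
    with corners(3) have "[encode (pos_part e1) = encode (pos_part e2)] (mod int v)"
      by (simp add: cong_iff_dvd_diff dvd_diff_commute)
    then have "\<forall>j<n. pos_part e1 j = pos_part e2 j"
      using shifts shifts_parts_bounded(2) by (intro encode_cong_imp_eq) blast+
    with i parts(2) show False
      by blast
  qed
  moreover have "array x1 y2 = None"
    using no_shift_across[OF e2 shifts(1) corners(2) i opposite] by (simp add: array_eq_None_iff)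
  moreover have "array x2 y1 = None"
    using no_shift_across[OF e1 shifts(2) cong_sym[OF corners(2)] i] opposite
    by (simp add: array_eq_None_iff)
  ultimately show ?thesis by blast
qed

theorem is_PDA_over_array: "is_PDA_over labels v v (v - (2 * m) ^ n) array"
  unfolding is_PDA_over_def
proof (intro conjI allI impI ballI)
  fix x y l assume "array x y = Some l"
  then show "l \<in> labels"
    unfolding array_eq_Some_iff shift_of_def using label_in_labels by blast
next
  fix y assume "y < v"
  have entries: "{x. x < v \<and> (\<exists>e. shift_of x y e)} \<subseteq> {..<v}"
    by auto
  have "{x. x < v \<and> array x y = None} = {..<v} - {x. x < v \<and> (\<exists>e. shift_of x y e)}"
    unfolding array_eq_None_iff by auto
  then show "card {x. x < v \<and> array x y = None} = v - (2 * m) ^ n"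
    using card_Diff_subset[OF finite_subset[OF entries] entries] card_column_entries[of y]
    by simp
qed (use labels_occur array_same_label in blast)+

end

lemma exists_PDA_box:
  assumes "(2 * m + 1) ^ n \<le> v"
  shows "exists_PDA v v (v - (2 * m) ^ n) (m ^ n * v)"
proof -
  interpret box_PDA m n v
    using assms by unfold_locales
  have "finite labels"
    unfolding labels_def by (simp add: finite_PiE)
  from exists_PDA_if_is_PDA_over[OF this is_PDA_over_array] show ?thesis
    by (simp add: card_labels)
qed

lemma odd_floor_root_pow_le:
  assumes "0 < n" and "1 \<le> root n (real v)"
  shows "(2 * nat \<lfloor>(root n (real v) - 1) / 2\<rfloor> + 1) ^ n \<le> v"
proof -
  define q where "q = root n (real v)"
  have "0 \<le> \<lfloor>(q - 1) / 2\<rfloor>"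
    using assms(2) unfolding q_def by simp
  then have "2 * real (nat \<lfloor>(q - 1) / 2\<rfloor>) + 1 \<le> q"
    using of_int_floor_le[of "(q - 1) / 2"] by (simp add: field_simps)
  then have "real (2 * nat \<lfloor>(q - 1) / 2\<rfloor> + 1) ^ n \<le> q ^ n"
    by (intro power_mono) auto
  also have "q ^ n = real v"
    unfolding q_def using assms(1) by simp
  finally show ?thesis
    unfolding q_def by (metis of_nat_le_iff of_nat_power)
qed

theorem theorem3:
  fixes n v :: nat
  assumes "n > 0" and "odd v" and "v > 0"
    and "root n (real v) \<ge> 3"
  defines "q \<equiv> root n (real v)"
  defines "m \<equiv> nat \<lfloor>(q - 1) / 2\<rfloor>"
  shows "exists_PDA v v (v - (2 * m) ^ n) (m ^ n * v)
         \<and> (\<forall>N::nat. N > 0 \<longrightarrow>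
              exists_caching_scheme v (real N * (1 - 2 ^ n * real m ^ n / q ^ n)) N v (real m ^ n))"
proof -
  have radix: "(2 * m + 1) ^ n \<le> v"
    using odd_floor_root_pow_le[OF assms(1)] assms(4) unfolding m_def q_def by simp
  then have PDA: "exists_PDA v v (v - (2 * m) ^ n) (m ^ n * v)"
    by (rule exists_PDA_box)
  then obtain P where P: "is_PDA v v (v - (2 * m) ^ n) (m ^ n * v) P"
    unfolding exists_PDA_def by blast
  have "(2 * m) ^ n \<le> v"
    using radix power_mono[of "2 * m" "2 * m + 1" n] by linarith
  moreover have "q ^ n = real v"
    unfolding q_def using assms(1) by simp
  ultimately have "real (v - (2 * m) ^ n) = (1 - 2 ^ n * real m ^ n / q ^ n) * real v"
    using assms(3) by (simp add: field_simps)
  then have "exists_caching_scheme v (real N * (1 - 2 ^ n * real m ^ n / q ^ n)) N v (real m ^ n)" for N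
    using assms(3) by (intro caching_scheme_of_PDA[OF P]) auto
  with PDA show ?thesis by blast
qed

end
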